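(* Fix an integer $k\ge 1$. There exists a function $\epsilon=\epsilon(h)$ with $\epsilon(h)\to 0$ as $h\to\infty$ such that for every $h$ and every ray $\rho\in S_k(h)$ one has \[\frac{2-\epsilon(h)}{k+2}\,h\;\le\;|u_\rho|\;\le\;\frac{2}{k}\,h.\]
   Context: A ray is a half-line $\rho=\mathbb{R}_{\ge 0}v\subset\mathbb{R}^2$ with $v\in\mathbb{Z}^2\setminus\{0\}$; $u_\rho$ is its primitive lattice generator. On $\mathbb{Z}^2$ use the norm $|(x,y)|=\max\{|x|,|y|\}$, and $|\rho|=|u_\rho|$. $\Sigma_h$ is the complete fan whose rays are all rays $\rho$ with $|\rho|\le h$ and whose $2$-dimensional cones are spanned by angularly consecutive such rays; every such cone is smooth. For $\rho\in\Sigma_h(1)$, let $\tau,\omega$ be its two neighbors in $\Sigma_h$ (the rays adjacent to $\rho$ in angular order on either side). Removing $\rho$ (blowing down along $\rho$) yields the cone spanned by $\tau,\omega$, whose singularity index $|\det(u_\tau,u_\omega)|$ equals the unique integer $k$ with $u_\tau+u_\omega=k\,u_\rho$. $S_k(h)$ is the set of rays $\rho\in\Sigma_h(1)$ for which this index equals $k$, and $S_{\ge k}(h)$ the set for which it is at least $k$. *)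

theory Defs
  imports Complex_Main
begin

text \<open>Lattice vectors of Z^2 are represented as pairs of integers. A ray is identified
with its primitive lattice generator (a primitive vector), so rays are in bijection
with primitive vectors.\<close>

definition primitive :: "int \<times> int \<Rightarrow> bool" where
  "primitive v \<longleftrightarrow> gcd (fst v) (snd v) = 1"

definition maxnorm :: "int \<times> int \<Rightarrow> int" where
  "maxnorm v = max \<bar>fst v\<bar> \<bar>snd v\<bar>"

definition det2 :: "int \<times> int \<Rightarrow> int \<times> int \<Rightarrow> int" where
  "det2 a b = fst a * snd b - snd a * fst b"

definition rays :: "nat \<Rightarrow> (int \<times> int) set" where
  "rays h = {v. primitive v \<and> maxnorm v \<le> int h}"

text \<open>b is the angularly next ray after a (counterclockwise) in Sigma_h: b lies strictly
counterclockwise from a within a half-turn, and no ray of Sigma_h lies strictly between them.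
(For h \<ge> 1 consecutive rays are less than a half-turn apart, since the four coordinate
rays belong to Sigma_h.)\<close>
definition ccw_next :: "nat \<Rightarrow> int \<times> int \<Rightarrow> int \<times> int \<Rightarrow> bool" where
  "ccw_next h a b \<longleftrightarrow> a \<in> rays h \<and> b \<in> rays h \<and> det2 a b > 0 \<and>
     \<not> (\<exists>c \<in> rays h. det2 a c > 0 \<and> det2 c b > 0)"

definition S :: "nat \<Rightarrow> nat \<Rightarrow> (int \<times> int) set" where
  "S k h = {u \<in> rays h. \<exists>t w. ccw_next h t u \<and> ccw_next h u w \<and> \<bar>det2 t w\<bar> = int k}"

end

theory Submission
  imports Defs "HOL-Library.Product_Plus"
begin

text \<open>Consecutive rays t, u of Sigma_h form a unimodular basis: otherwise the Bezout vector c
with det(t,c) = 1, reduced modulo t, satisfies det(t,u) c = det(c,u) t + u and is a ray of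
norm at most h strictly between t and u. Hence t + u is a primitive vector strictly between
them, so |t + u| > h, and for a ray u with neighbours t, w the same Cramer identity gives
t + w = k u with k = det(t,w). The upper bound is then |k u| \<le> |t| + |w| \<le> 2h. For the lower
bound write p = t + u and q = w + u, so p + q = (k + 2) u. If, say, |u| = u_x, unimodularity
of (p,u) together with |p| > h and |p - u| \<le> h forces p_x \<ge> h, and likewise q_x \<ge> h, whence
(k + 2) |u| \<ge> 2h. In particular the bound holds with \<epsilon> = 0.\<close>

lemma maxnorm_le_iff: "maxnorm v \<le> H \<longleftrightarrow> \<bar>fst v\<bar> \<le> H \<and> \<bar>snd v\<bar> \<le> H"
  by (simp add: maxnorm_def)

lemma less_maxnorm_iff: "H < maxnorm v \<longleftrightarrow> H < \<bar>fst v\<bar> \<or> H < \<bar>snd v\<bar>"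
  by (simp add: maxnorm_def less_max_iff_disj)

lemma det2_add_left: "det2 (a + b) c = det2 a c + det2 b c"
  and det2_add_right: "det2 a (b + c) = det2 a b + det2 a c"
  and det2_self: "det2 a a = 0"
  and det2_swap: "det2 b a = - det2 a b"
  by (simp_all add: det2_def algebra_simps)

lemma det2_cramer:
  "det2 a b * fst c = det2 c b * fst a + det2 a c * fst b"
  "det2 a b * snd c = det2 c b * snd a + det2 a c * snd b"
  by (simp_all add: det2_def algebra_simps)

lemma primitive_if_det2_eq_1:
  assumes "det2 a v = 1"
  shows "primitive v"
proof -
  have "gcd (fst v) (snd v) dvd det2 a v"
    unfolding det2_def by (simp add: dvd_diff)
  then show ?thesis using assms by (simp add: primitive_def)
qed

lemma abs_le_if_mult_eq_combination:
  fixes a b c d r H :: int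
  assumes comb: "d * c = r * a + b" and "0 \<le> r" "r < d" "\<bar>a\<bar> \<le> H" "\<bar>b\<bar> \<le> H"
  shows "\<bar>c\<bar> \<le> H"
proof -
  have "d * \<bar>c\<bar> = \<bar>r * a + b\<bar>"
    using \<open>0 \<le> r\<close> \<open>r < d\<close> by (simp flip: comb add: abs_mult)
  also have "\<dots> \<le> r * \<bar>a\<bar> + \<bar>b\<bar>"
    using abs_triangle_ineq[of "r * a" b] \<open>0 \<le> r\<close> by (simp add: abs_mult)
  also have "\<dots> \<le> r * H + H"
    using assms by (intro add_mono mult_left_mono) auto
  also have "\<dots> = (r + 1) * H"
    by (simp add: algebra_simps)
  also have "\<dots> \<le> d * H"
    using \<open>r < d\<close> \<open>\<bar>b\<bar> \<le> H\<close> by (intro mult_right_mono) auto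
  finally show ?thesis using \<open>0 \<le> r\<close> \<open>r < d\<close> by simp
qed

lemma primitive_between:
  assumes t: "primitive t" and u: "primitive u" and d: "2 \<le> det2 t u"
    and "maxnorm t \<le> H" "maxnorm u \<le> H"
  obtains c where "primitive c" "maxnorm c \<le> H" "det2 t c = 1" "0 < det2 c u"
proof -
  obtain m n where "m * fst t + n * snd t = 1"
    using t bezout_int[of "fst t" "snd t"] by (auto simp: primitive_def)
  then have c0: "det2 t (- n, m) = 1"
    by (simp add: det2_def algebra_simps)
  define j where "j = det2 (- n, m) u div det2 t u"
  define c where "c = (- n, m) - (j * fst t, j * snd t)"
  define r where "r = det2 c u"
  have tc: "det2 t c = 1"
    using c0 by (simp add: c_def det2_def algebra_simps)
  have "r = det2 (- n, m) u - j * det2 t u"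
    unfolding r_def c_def by (simp add: det2_def algebra_simps)
  then have r: "r = det2 (- n, m) u mod det2 t u"
    unfolding j_def by (simp add: minus_div_mult_eq_mod)
  have cx: "det2 t u * fst c = r * fst t + fst u"
    and cy: "det2 t u * snd c = r * snd t + snd u"
    using det2_cramer[of t u c] tc by (simp_all add: r_def)
  have r_bounds: "0 \<le> r" "r < det2 t u"
    using d r by simp_all
  have "r \<noteq> 0"
  proof
    assume "r = 0"
    then have "det2 t u dvd gcd (fst u) (snd u)"
      using cx cy by (metis add_0 dvdI gcd_greatest mult_zero_left)
    then have "det2 t u dvd 1"
      using u by (metis primitive_def)
    with d show False
      using zdvd_imp_le[of "det2 t u" 1] by simp
  qed
  show thesis
  proof
    show "primitive c" using tc by (rule primitive_if_det2_eq_1)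
    show "maxnorm c \<le> H"
      using abs_le_if_mult_eq_combination[OF cx r_bounds]
        abs_le_if_mult_eq_combination[OF cy r_bounds] assms
      by (simp add: maxnorm_le_iff)
    show "det2 t c = 1" by (fact tc)
    show "0 < det2 c u" using \<open>r \<noteq> 0\<close> r_bounds by (simp add: r_def)
  qed
qed

lemma rays_iff: "v \<in> rays h \<longleftrightarrow> primitive v \<and> maxnorm v \<le> int h"
  by (simp add: rays_def)

lemma ccw_next_det2_eq_1:
  assumes next_tu: "ccw_next h t u"
  shows "det2 t u = 1"
proof (rule ccontr)
  assume "det2 t u \<noteq> 1"
  with next_tu have "2 \<le> det2 t u" by (simp add: ccw_next_def)
  moreover have "primitive t" "primitive u" "maxnorm t \<le> int h" "maxnorm u \<le> int h"
    using next_tu by (auto simp: ccw_next_def rays_iff)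
  ultimately obtain c where "c \<in> rays h" "0 < det2 t c" "0 < det2 c u"
    by (metis primitive_between rays_iff zero_less_one)
  with next_tu show False by (auto simp: ccw_next_def)
qed

lemma ccw_next_less_maxnorm_add:
  assumes next_tu: "ccw_next h t u"
  shows "int h < maxnorm (t + u)"
proof (rule ccontr)
  assume "\<not> int h < maxnorm (t + u)"
  moreover have tu: "det2 t u = 1" using next_tu by (rule ccw_next_det2_eq_1)
  ultimately have "t + u \<in> rays h"
    by (simp add: rays_iff det2_add_right det2_self primitive_if_det2_eq_1[of t])
  moreover have "0 < det2 t (t + u)" "0 < det2 (t + u) u"
    using tu by (simp_all add: det2_add_left det2_add_right det2_self)
  ultimately show False using next_tu by (auto simp: ccw_next_def)
qed

lemma maxnorm_uminus [simp]: "maxnorm (- v) = maxnorm v"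
  and maxnorm_swap [simp]: "maxnorm (prod.swap v) = maxnorm v"
  by (simp_all add: maxnorm_def max.commute)

lemma maxnorm_diff_commute: "maxnorm (a - b) = maxnorm (b - a)"
  by (simp add: maxnorm_def abs_minus_commute)

lemma swap_diff: "prod.swap (a - b) = prod.swap a - prod.swap b"
  by (simp add: prod_eq_iff)

lemma det2_uminus [simp]: "det2 (- a) (- b) = det2 a b"
  and det2_swap_swap [simp]: "det2 (prod.swap a) (prod.swap b) = - det2 a b"
  by (simp_all add: det2_def)

lemma dominant_coord_ge:
  fixes p u :: "int \<times> int"
  assumes det: "\<bar>det2 p u\<bar> = 1" and dom: "\<bar>snd u\<bar> \<le> fst u"
    and big: "H < maxnorm p" and near: "maxnorm (p - u) \<le> H"
  shows "H \<le> fst p"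
proof (rule ccontr)
  assume "\<not> H \<le> fst p"
  have "fst u \<noteq> 0" using det dom by (auto simp: det2_def)
  then have "1 \<le> fst u" using dom by simp
  have p1: "\<bar>fst p\<bar> \<le> H - 1" using \<open>\<not> H \<le> fst p\<close> near \<open>1 \<le> fst u\<close>
    by (simp add: maxnorm_le_iff) linarith
  then have "H + 1 \<le> \<bar>snd p\<bar>" using big by (simp add: less_maxnorm_iff)
  then have "(H + 1) * fst u \<le> \<bar>snd p * fst u\<bar>"
    using \<open>1 \<le> fst u\<close> by (simp add: abs_mult mult_right_mono)
  also have "\<dots> \<le> \<bar>fst p * snd u\<bar> + 1"
    using det by (simp add: det2_def)
  also have "\<bar>fst p * snd u\<bar> \<le> (H - 1) * fst u"
    using p1 dom by (simp add: abs_mult mult_mono)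
  finally show False using \<open>1 \<le> fst u\<close> by (simp add: algebra_simps)
qed

lemma lower_bound_by_unimodular_sums:
  fixes p q u :: "int \<times> int" and n H :: int
  assumes "\<bar>det2 p u\<bar> = 1" "\<bar>det2 q u\<bar> = 1"
    and "H < maxnorm p" "H < maxnorm q"
    and "maxnorm (p - u) \<le> H" "maxnorm (q - u) \<le> H"
    and "p + q = (n * fst u, n * snd u)"
  shows "2 * H \<le> n * maxnorm u"
proof -
  have dominant_x: "2 * H \<le> n * maxnorm u"
    if "\<bar>det2 p u\<bar> = 1" "\<bar>det2 q u\<bar> = 1" "H < maxnorm p" "H < maxnorm q"
      "maxnorm (p - u) \<le> H" "maxnorm (q - u) \<le> H" "p + q = (n * fst u, n * snd u)"
      "\<bar>snd u\<bar> \<le> fst u"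
    for p q u :: "int \<times> int"
  proof -
    have "H \<le> fst p" "H \<le> fst q"
      using that by (simp_all add: dominant_coord_ge)
    moreover have "fst p + fst q = n * fst u"
      using arg_cong[OF \<open>p + q = _\<close>, of fst] by simp
    ultimately show ?thesis
      using \<open>\<bar>snd u\<bar> \<le> fst u\<close> by (simp add: maxnorm_def)
  qed
  consider "\<bar>snd u\<bar> \<le> fst u" | "\<bar>snd (- u)\<bar> \<le> fst (- u)"
    | "\<bar>snd (prod.swap u)\<bar> \<le> fst (prod.swap u)" | "\<bar>snd (- prod.swap u)\<bar> \<le> fst (- prod.swap u)"
    by (simp; linarith)
  then show ?thesis
  proof cases
    case 1
    then show ?thesis using assms dominant_x[of p u q] by simp
  next
    case 2
    then show ?thesis using assms dominant_x[of "- p" "- u" "- q"]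
      by (simp add: prod_eq_iff maxnorm_diff_commute[of u])
  next
    case 3
    then show ?thesis using assms dominant_x[of "prod.swap p" "prod.swap u" "prod.swap q"]
      by (simp add: prod_eq_iff flip: swap_diff)
  next
    case 4
    then show ?thesis using assms dominant_x[of "- prod.swap p" "- prod.swap u" "- prod.swap q"]
      by (simp add: prod_eq_iff maxnorm_diff_commute[of u] flip: swap_diff)
  qed
qed

lemma upper_bound_by_sum:
  fixes t w u :: "int \<times> int" and n H :: int
  assumes "maxnorm t \<le> H" "maxnorm w \<le> H" and sum: "t + w = (n * fst u, n * snd u)"
  shows "\<bar>n\<bar> * maxnorm u \<le> 2 * H"
proof -
  have "n * fst u = fst t + fst w" "n * snd u = snd t + snd w"
    using arg_cong[OF sum, of fst] arg_cong[OF sum, of snd] by simp_all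
  moreover have "\<bar>fst t + fst w\<bar> \<le> 2 * H" "\<bar>snd t + snd w\<bar> \<le> 2 * H"
    using assms abs_triangle_ineq[of "fst t" "fst w"] abs_triangle_ineq[of "snd t" "snd w"]
    unfolding maxnorm_le_iff by linarith+
  ultimately show ?thesis
    by (auto simp: maxnorm_def abs_mult max_def)
qed

lemma S_maxnorm_bounds:
  assumes "u \<in> S k h"
  shows "2 * int h \<le> (int k + 2) * maxnorm u" and "int k * maxnorm u \<le> 2 * int h"
proof -
  obtain t w where next_tu: "ccw_next h t u" and next_uw: "ccw_next h u w"
    and k: "\<bar>det2 t w\<bar> = int k"
    using assms by (auto simp: S_def)
  have norms: "maxnorm t \<le> int h" "maxnorm w \<le> int h"
    using next_tu next_uw by (auto simp: ccw_next_def rays_iff)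
  have unimodular: "det2 t u = 1" "det2 u w = 1"
    using next_tu next_uw by (simp_all add: ccw_next_det2_eq_1)
  have sum: "t + w = (det2 t w * fst u, det2 t w * snd u)"
    using det2_cramer[of t w u] unimodular by (simp add: prod_eq_iff)
  show "int k * maxnorm u \<le> 2 * int h"
    using upper_bound_by_sum[OF norms sum] k by simp
  have "2 * int h \<le> (det2 t w + 2) * maxnorm u"
  proof (rule lower_bound_by_unimodular_sums)
    show "\<bar>det2 (t + u) u\<bar> = 1" "\<bar>det2 (w + u) u\<bar> = 1"
      using unimodular by (simp_all add: det2_add_left det2_self det2_swap[of u w])
    show "int h < maxnorm (t + u)" "int h < maxnorm (w + u)"
      using ccw_next_less_maxnorm_add[OF next_tu] ccw_next_less_maxnorm_add[OF next_uw]
      by (simp_all add: add.commute)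
    show "maxnorm (t + u - u) \<le> int h" "maxnorm (w + u - u) \<le> int h"
      using norms by simp_all
    show "t + u + (w + u) = ((det2 t w + 2) * fst u, (det2 t w + 2) * snd u)"
      using sum by (simp add: prod_eq_iff algebra_simps)
  qed
  also have "\<dots> \<le> (int k + 2) * maxnorm u"
    using k by (intro mult_right_mono) (auto simp: maxnorm_def)
  finally show "2 * int h \<le> (int k + 2) * maxnorm u" .
qed

theorem proposition4p2:
  fixes k :: nat
  assumes "k \<ge> 1"
  shows "\<exists>\<epsilon> :: nat \<Rightarrow> real. (\<epsilon> \<longlongrightarrow> 0) at_top \<and>
    (\<forall>h. \<forall>u \<in> S k h.
        (2 - \<epsilon> h) / (real k + 2) * real h \<le> real_of_int (maxnorm u) \<and>
        real_of_int (maxnorm u) \<le> 2 / real k * real h)"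
proof (intro exI[of _ "\<lambda>_. 0"] conjI allI ballI)
  fix h u
  assume "u \<in> S k h"
  then have "real_of_int (2 * int h) \<le> real_of_int ((int k + 2) * maxnorm u)"
    and "real_of_int (int k * maxnorm u) \<le> real_of_int (2 * int h)"
    by (simp_all only: of_int_le_iff S_maxnorm_bounds)
  then show "(2 - 0) / (real k + 2) * real h \<le> real_of_int (maxnorm u)"
    and "real_of_int (maxnorm u) \<le> 2 / real k * real h"
    using assms by (simp_all add: field_simps)
qed simp

end
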